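(* Let $n\ge1$ and $\pi\in\mathcal I^C_{2n}(321)$. Then $$\mathrm{Des}^+(\pi)=\{i\in [n] : i\in E_{\pi}\text{ and } i+1\notin E_{\pi}\}.$$ (In particular $n\in\mathrm{Des}^+(\pi)$ if and only if $n\in E_\pi$.)
   Context: $[n]=\{1,\dots,n\}$. A permutation $\pi\in\mathcal S_m$ is centrosymmetric if $\pi(i)+\pi(m+1-i)=m+1$ for all $i$; $\mathcal I^C_{m}(321)$ is the set of centrosymmetric involutions in $\mathcal S_m$ avoiding $321$. A descent of $\pi$ is a position $i$ with $\pi(i)>\pi(i+1)$; for $\pi\in\mathcal S_{2n}$, $\mathrm{Des}^+(\pi)$ is the set of descents lying in $[n]$. $E_\pi=\{i\in[n]:\pi(i)>i\}$ is the set of excedances of $\pi$ lying in $[n]$. *)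

theory Defs
  imports "HOL-Combinatorics.Permutations"
begin

text \<open>Permutations of [m] = {1..m} are functions nat => nat permuting {1..m}.\<close>

definition centrosymmetric :: "nat \<Rightarrow> (nat \<Rightarrow> nat) \<Rightarrow> bool" where
  "centrosymmetric m \<pi> \<longleftrightarrow> (\<forall>i\<in>{1..m}. \<pi> i + \<pi> (m + 1 - i) = m + 1)"

definition involution :: "(nat \<Rightarrow> nat) \<Rightarrow> bool" where
  "involution \<pi> \<longleftrightarrow> (\<forall>i. \<pi> (\<pi> i) = i)"

definition avoids321 :: "nat \<Rightarrow> (nat \<Rightarrow> nat) \<Rightarrow> bool" where
  "avoids321 m \<pi> \<longleftrightarrow> \<not> (\<exists>i j k. 1 \<le> i \<and> i < j \<and> j < k \<and> k \<le> m \<and> \<pi> i > \<pi> j \<and> \<pi> j > \<pi> k)"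

definition centro_inv_321 :: "nat \<Rightarrow> (nat \<Rightarrow> nat) set" where
  "centro_inv_321 m = {\<pi>. \<pi> permutes {1..m} \<and> involution \<pi> \<and> centrosymmetric m \<pi> \<and> avoids321 m \<pi>}"

definition des_plus :: "nat \<Rightarrow> (nat \<Rightarrow> nat) \<Rightarrow> nat set" where
  "des_plus n \<pi> = {i\<in>{1..n}. \<pi> i > \<pi> (i + 1)}"

definition exc :: "nat \<Rightarrow> (nat \<Rightarrow> nat) \<Rightarrow> nat set" where
  "exc n \<pi> = {i\<in>{1..n}. \<pi> i > i}"

end

theory Submission
  imports Defs
begin

text \<open>Let \<open>\<pi> i > \<pi> (i+1)\<close> with \<open>\<pi>\<close> 321-avoiding. By pigeonhole some position
  \<open>k \<le> i+1\<close> carries a value \<open>\<ge> i+1\<close>; if \<open>\<pi> i \<le> i\<close>, then \<open>k < i\<close> and \<open>k, i, i+1\<close> is a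
  321 pattern. Symmetrically some \<open>k \<ge> i\<close> carries a value \<open>\<le> i\<close>; if \<open>\<pi> (i+1) > i+1\<close>, then
  \<open>k > i+1\<close> and \<open>i, i+1, k\<close> is a 321 pattern. Conversely \<open>\<pi> (i+1) \<le> i+1 \<le> \<pi> i\<close> forces a
  descent by injectivity. At the middle position, centrosymmetry gives \<open>\<pi> n + \<pi> (n+1) = 2n+1\<close>,
  so \<open>n\<close> is a descent exactly when it is an excedance.\<close>

lemma permutes_ex_prefix_value_ge:
  assumes "p permutes {1..m::nat}" and "1 \<le> j" "j \<le> m"
  shows "\<exists>k\<in>{1..j}. j \<le> p k"
proof (rule ccontr)
  assume none: "\<not> ?thesis"
  have "p k \<in> {1..j-1}" if "k \<in> {1..j}" for k
  proof -
    have "p k < j" using none that not_le by blast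
    then show ?thesis using that assms permutes_in_image[OF assms(1), of k] by auto
  qed
  then have "p ` {1..j} \<subseteq> {1..j-1}" by blast
  moreover have "inj_on p {1..j}"
    using permutes_inj[OF assms(1)] by (rule inj_on_subset) simp
  ultimately have "card {1..j} \<le> card {1..j-1}"
    by (intro card_inj_on_le) auto
  with \<open>1 \<le> j\<close> show False by simp
qed

lemma permutes_ex_suffix_value_le:
  assumes "p permutes {1..m::nat}" and "1 \<le> j" "j \<le> m"
  shows "\<exists>k\<in>{j..m}. p k \<le> j"
proof (rule ccontr)
  assume none: "\<not> ?thesis"
  have "p k \<in> {j+1..m}" if "k \<in> {j..m}" for k
  proof -
    have "j < p k" using none that not_le by blast
    then show ?thesis using that assms permutes_in_image[OF assms(1), of k] by auto
  qed
  then have "p ` {j..m} \<subseteq> {j+1..m}" by blast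
  moreover have "inj_on p {j..m}"
    using permutes_inj[OF assms(1)] by (rule inj_on_subset) simp
  ultimately have "card {j..m} \<le> card {j+1..m}"
    by (intro card_inj_on_le) auto
  with \<open>j \<le> m\<close> show False by simp
qed

lemma avoids321_descent_imp_excedance:
  assumes p: "p permutes {1..m}" and av: "avoids321 m p"
    and i: "1 \<le> i" "i + 1 \<le> m" and des: "p (i + 1) < p i"
  shows "i < p i"
proof (rule ccontr)
  assume "\<not> i < p i"
  obtain k where k: "k \<in> {1..i+1}" "i + 1 \<le> p k"
    using permutes_ex_prefix_value_ge[OF p, of "i + 1"] i by auto
  moreover have "k \<noteq> i" "k \<noteq> i + 1"
    using k \<open>\<not> i < p i\<close> des by auto
  ultimately have "1 \<le> k \<and> k < i \<and> i < i + 1 \<and> i + 1 \<le> m \<and> p i < p k \<and> p (i + 1) < p i"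
    using k i des \<open>\<not> i < p i\<close> by auto
  with av show False unfolding avoids321_def by blast
qed

lemma avoids321_descent_imp_not_excedance_Suc:
  assumes p: "p permutes {1..m}" and av: "avoids321 m p"
    and i: "1 \<le> i" "i + 1 \<le> m" and des: "p (i + 1) < p i"
  shows "p (i + 1) \<le> i + 1"
proof (rule ccontr)
  assume "\<not> p (i + 1) \<le> i + 1"
  obtain k where k: "k \<in> {i..m}" "p k \<le> i"
    using permutes_ex_suffix_value_le[OF p, of i] i by auto
  moreover have "k \<noteq> i" "k \<noteq> i + 1"
    using k \<open>\<not> p (i + 1) \<le> i + 1\<close> des by auto
  ultimately have "1 \<le> i \<and> i < i + 1 \<and> i + 1 < k \<and> k \<le> m \<and> p (i + 1) < p i \<and> p k < p (i + 1)"
    using k i des \<open>\<not> p (i + 1) \<le> i + 1\<close> by auto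
  with av show False unfolding avoids321_def by blast
qed

lemma avoids321_descent_iff:
  assumes p: "p permutes {1..m}" and av: "avoids321 m p"
    and i: "1 \<le> i" "i + 1 \<le> m"
  shows "p (i + 1) < p i \<longleftrightarrow> i < p i \<and> p (i + 1) \<le> i + 1"
proof
  assume "p (i + 1) < p i"
  then show "i < p i \<and> p (i + 1) \<le> i + 1"
    using avoids321_descent_imp_excedance avoids321_descent_imp_not_excedance_Suc assms
    by blast
next
  assume "i < p i \<and> p (i + 1) \<le> i + 1"
  moreover have "p (i + 1) \<noteq> p i"
    using permutes_inj[OF p] by (metis injD n_not_Suc_n Suc_eq_plus1)
  ultimately show "p (i + 1) < p i" by linarith
qed

lemma centrosymmetric_middle:
  assumes "centrosymmetric (2 * n) p" and "1 \<le> n"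
  shows "p n + p (n + 1) = 2 * n + 1"
proof -
  have "p n + p (2 * n + 1 - n) = 2 * n + 1"
    using assms unfolding centrosymmetric_def by (intro bspec[of _ _ n]) auto
  then show ?thesis by (simp add: add.commute)
qed

theorem mainTheorem6:
  fixes n :: nat and \<pi> :: "nat \<Rightarrow> nat"
  assumes "n \<ge> 1" and "\<pi> \<in> centro_inv_321 (2 * n)"
  shows "des_plus n \<pi> = {i\<in>{1..n}. i \<in> exc n \<pi> \<and> i + 1 \<notin> exc n \<pi>}"
proof -
  have p: "\<pi> permutes {1..2*n}" and av: "avoids321 (2*n) \<pi>"
    and middle: "\<pi> n + \<pi> (n + 1) = 2 * n + 1"
    using assms centrosymmetric_middle unfolding centro_inv_321_def by auto
  have "\<pi> (i + 1) < \<pi> i \<longleftrightarrow> i \<in> exc n \<pi> \<and> i + 1 \<notin> exc n \<pi>"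
    if i: "i \<in> {1..n}" for i
  proof (cases "i = n")
    case True
    with middle \<open>n \<ge> 1\<close> show ?thesis unfolding exc_def by auto
  next
    case False
    with i avoids321_descent_iff[OF p av, of i] show ?thesis
      unfolding exc_def by auto
  qed
  then show ?thesis unfolding des_plus_def by auto
qed

end
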